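(* There exists a language which is accepted by a GLLOWJFA but not by any LOWJFA, and hence LOWJ ⊂ GLLOWJ (proper inclusion).
   Context: A left one-way jumping finite automaton (LOWJFA) is a tuple A = (Σ, Q, q_0, F, R) with alphabet Σ, finite state set Q, start state q_0, final states F ⊆ Q, and rules R ⊆ Q × Σ × Q; a rule (q,a,p) means the automaton goes from state p to state q deleting a, and for each p and a there is at most one such q. For p ∈ Q let Σ_p = {b ∈ Σ : (q,b,p) ∈ R for some q}. Configurations are strings in Σ^* Q; for (q,a,p) ∈ R, x ∈ (Σ \ Σ_p)^* and y ∈ Σ^*, the automaton moves from yaxp to xyq. The accepted language is the set of words w such that w q_0 leads in zero or more moves to q_f for some q_f ∈ F. A generalized left linear one-way jumping finite automaton (GLLOWJFA) is a tuple A = (Σ, Q, q_0, F, R) where R ⊂ Q × Σ^+ × Q is finite; a rule (q,w,p) means from p, delete w, go to q, and for each p ∈ Q and w ∈ Σ^+ there is at most one such q. For p ∈ Q let Σ_p = {w ∈ Σ^+ : (q,w,p) ∈ R for some q}. Configurations are strings in Σ^* Q Σ^*, and the moves are: (1) for t,u,v ∈ Σ^* and (q,x,p) ∈ R, the configuration vxupt moves to vqut, provided u contains no word of Σ_p as a subword and there is no nonempty prefix u_1 of u and nonempty suffix x_2 of x with x_2u_1 = x; (2) for x ∈ Σ^+ and y ∈ Σ^* such that y contains no word of Σ_p as a subword, ypx moves to yxp. The accepted language is {w ∈ Σ^* : w q_0 leads in zero or more moves to q_f for some q_f ∈ F}. LOWJ and GLLOWJ denote the classes of languages accepted by LOWJFA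 and GLLOWJFA respectively. A LOWJFA is exactly a GLLOWJFA all of whose rules delete words of length 1, so LOWJ ⊆ GLLOWJ. *)

theory Defs
  imports Main "HOL-Library.Sublist"
begin

text \<open>An automaton is given by (Sigma, Q, q0, F, R); a rule (q,a,p) in R means:
  from state p, delete a, go to state q.  States are taken from type nat.\<close>

definition lowjfa :: "'a set \<Rightarrow> 's set \<Rightarrow> 's \<Rightarrow> 's set \<Rightarrow> ('s \<times> 'a \<times> 's) set \<Rightarrow> bool" where
  "lowjfa Sig Q q0 F R \<longleftrightarrow>
     finite Sig \<and> finite Q \<and> q0 \<in> Q \<and> F \<subseteq> Q \<and> R \<subseteq> Q \<times> Sig \<times> Q \<and>
     (\<forall>p a q q'. (q, a, p) \<in> R \<longrightarrow> (q', a, p) \<in> R \<longrightarrow> q = q')"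

definition lsig :: "('s \<times> 'a \<times> 's) set \<Rightarrow> 's \<Rightarrow> 'a set" where
  "lsig R p = {b. \<exists>q. (q, b, p) \<in> R}"

definition lowj_step :: "'a set \<Rightarrow> ('s \<times> 'a \<times> 's) set \<Rightarrow> ('a list \<times> 's) \<Rightarrow> ('a list \<times> 's) \<Rightarrow> bool" where
  "lowj_step Sig R c c' \<longleftrightarrow>
     (\<exists>q a p x y. (q, a, p) \<in> R \<and> x \<in> lists (Sig - lsig R p) \<and> y \<in> lists Sig \<and>
        c = (y @ [a] @ x, p) \<and> c' = (x @ y, q))"

definition lowj_lang :: "'a set \<Rightarrow> 's set \<Rightarrow> 's \<Rightarrow> 's set \<Rightarrow> ('s \<times> 'a \<times> 's) set \<Rightarrow> 'a list set" where
  "lowj_lang Sig Q q0 F R =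
     {w \<in> lists Sig. \<exists>qf \<in> F. (lowj_step Sig R)\<^sup>*\<^sup>* (w, q0) ([], qf)}"

definition LOWJ :: "'a list set set" where
  "LOWJ = {L. \<exists>Sig (Q :: nat set) q0 F R. lowjfa Sig Q q0 F R \<and> L = lowj_lang Sig Q q0 F R}"

definition gllowjfa :: "'a set \<Rightarrow> 's set \<Rightarrow> 's \<Rightarrow> 's set \<Rightarrow> ('s \<times> 'a list \<times> 's) set \<Rightarrow> bool" where
  "gllowjfa Sig Q q0 F R \<longleftrightarrow>
     finite Sig \<and> finite Q \<and> q0 \<in> Q \<and> F \<subseteq> Q \<and> finite R \<and>
     R \<subseteq> Q \<times> (lists Sig - {[]}) \<times> Q \<and>
     (\<forall>p w q q'. (q, w, p) \<in> R \<longrightarrow> (q', w, p) \<in> R \<longrightarrow> q = q')"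

definition gsig :: "('s \<times> 'a list \<times> 's) set \<Rightarrow> 's \<Rightarrow> 'a list set" where
  "gsig R p = {w. w \<noteq> [] \<and> (\<exists>q. (q, w, p) \<in> R)}"

definition no_factor :: "'a list set \<Rightarrow> 'a list \<Rightarrow> bool" where
  "no_factor S u \<longleftrightarrow> \<not> (\<exists>w \<in> S. sublist w u)"

definition gl_step :: "'a set \<Rightarrow> ('s \<times> 'a list \<times> 's) set \<Rightarrow>
    ('a list \<times> 's \<times> 'a list) \<Rightarrow> ('a list \<times> 's \<times> 'a list) \<Rightarrow> bool" where
  "gl_step Sig R c c' \<longleftrightarrow>
     (\<exists>q x p t u v. (q, x, p) \<in> R \<and> t \<in> lists Sig \<and> u \<in> lists Sig \<and> v \<in> lists Sig \<and>
        no_factor (gsig R p) u \<and>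
        \<not> (\<exists>u1 u2 x1 x2. u1 \<noteq> [] \<and> x2 \<noteq> [] \<and> u = u1 @ u2 \<and> x = x1 @ x2 \<and> x2 @ u1 = x) \<and>
        c = (v @ x @ u, p, t) \<and> c' = (v, q, u @ t))
   \<or> (\<exists>p x y. x \<noteq> [] \<and> x \<in> lists Sig \<and> y \<in> lists Sig \<and> no_factor (gsig R p) y \<and>
        c = (y, p, x) \<and> c' = (y @ x, p, []))"

definition gl_lang :: "'a set \<Rightarrow> 's set \<Rightarrow> 's \<Rightarrow> 's set \<Rightarrow> ('s \<times> 'a list \<times> 's) set \<Rightarrow> 'a list set" where
  "gl_lang Sig Q q0 F R =
     {w \<in> lists Sig. \<exists>qf \<in> F. (gl_step Sig R)\<^sup>*\<^sup>* (w, q0, []) ([], qf, [])}"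

definition GLLOWJ :: "'a list set set" where
  "GLLOWJ = {L. \<exists>Sig (Q :: nat set) q0 F R. gllowjfa Sig Q q0 F R \<and> L = gl_lang Sig Q q0 F R}"

end

theory Submission
  imports Defs
begin

text \<open>
  The witness is the language of the one-state GLLOWJFA whose only rule deletes the factor 01.
  It contains every word 0^n 1^n, but no word with different numbers of 0s and 1s or with
  first letter 1, since deleting a factor 01 preserves this property.

  No LOWJFA accepts it. Suppose a state p decides which words w have w 1^n in the language.
  A prefix of letters that p cannot read may be moved to the end of the word without changing
  the next move, so if p could not read 1, it could not tell 1 0^(n+1) from 0^(n+1) 1. Hence p
  reads 1, and reading the final 1 of w 1 leads to a state that decides the suffix 1^(n+1).
  As there are finitely many states, the suffixes 1^m and 1^n are identified for some m \<noteq> n,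
  although 0^m separates them.

  Conversely, a LOWJFA is simulated by the GLLOWJFA with the same rules on one-letter words:
  the GLLOWJFA configuration (l, p, r) stands for the LOWJFA configuration (r @ l, p).
\<close>

lemma append_eq_append_Cons_notin_left:
  "a \<notin> set y \<Longrightarrow> y @ u = Y @ a # X \<Longrightarrow> \<exists>Y'. Y = y @ Y' \<and> u = Y' @ a # X"
  by (auto simp: append_eq_append_conv2 append_eq_Cons_conv)

lemma append_eq_append_Cons_notin_right:
  "a \<notin> set y \<Longrightarrow> u @ y = Y @ a # X \<Longrightarrow> \<exists>X'. X = X' @ y \<and> u = Y @ a # X'"
  by (auto simp: append_eq_append_conv2 append_eq_Cons_conv Cons_eq_append_conv)

lemma append_eq_append_Cons_cases:
  "r @ l = Y @ a # X \<Longrightarrow> (\<exists>us. X = us @ l) \<or> (\<exists>v. l = v @ a # X \<and> Y = r @ v)"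
  by (auto simp: append_eq_append_conv2 append_eq_Cons_conv Cons_eq_append_conv)


section \<open>Rotation and residuals in LOWJFA\<close>

lemma in_lsigI: "(q, a, p) \<in> R \<Longrightarrow> a \<in> lsig R p"
  unfolding lsig_def by blast

lemma lowj_stepI:
  assumes "(q, a, p) \<in> R" "Y \<in> lists Sig" "X \<in> lists Sig" "set X \<inter> lsig R p = {}"
  shows "lowj_step Sig R (Y @ a # X, p) (X @ Y, q)"
  unfolding lowj_step_def using assms by fastforce

lemma lowj_stepE:
  assumes "lowj_step Sig R (w, p) (w', q)"
  obtains a X Y where "(q, a, p) \<in> R" "Y \<in> lists Sig" "X \<in> lists Sig" "set X \<inter> lsig R p = {}"
    "w = Y @ a # X" "w' = X @ Y"
  using assms unfolding lowj_step_def by fastforce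

lemma lowj_step_rotate:
  assumes "set y \<inter> lsig R p = {}" "x \<in> lists Sig" "y \<in> lists Sig"
  shows "lowj_step Sig R (y @ x, p) (w', q) \<longleftrightarrow> lowj_step Sig R (x @ y, p) (w', q)"
proof
  assume "lowj_step Sig R (y @ x, p) (w', q)"
  then obtain a X Y where st: "(q, a, p) \<in> R" "Y \<in> lists Sig" "X \<in> lists Sig"
    "set X \<inter> lsig R p = {}" "y @ x = Y @ a # X" "w' = X @ Y"
    by (rule lowj_stepE)
  have "a \<notin> set y" using assms(1) in_lsigI[OF st(1)] by blast
  then obtain Y' where Y': "Y = y @ Y'" "x = Y' @ a # X"
    using append_eq_append_Cons_notin_left st(5) by metis
  have "lowj_step Sig R (Y' @ a # (X @ y), p) ((X @ y) @ Y', q)"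
  proof (rule lowj_stepI)
    show "Y' \<in> lists Sig" using st(2) Y'(1) by simp
    show "X @ y \<in> lists Sig" "set (X @ y) \<inter> lsig R p = {}" using st(3,4) assms(1,3) by auto
  qed (rule st(1))
  then show "lowj_step Sig R (x @ y, p) (w', q)" using Y' st(6) by simp
next
  assume "lowj_step Sig R (x @ y, p) (w', q)"
  then obtain a X Y where st: "(q, a, p) \<in> R" "Y \<in> lists Sig" "X \<in> lists Sig"
    "set X \<inter> lsig R p = {}" "x @ y = Y @ a # X" "w' = X @ Y"
    by (rule lowj_stepE)
  have "a \<notin> set y" using assms(1) in_lsigI[OF st(1)] by blast
  then obtain X' where X': "X = X' @ y" "x = Y @ a # X'"
    using append_eq_append_Cons_notin_right st(5) by metis
  have "lowj_step Sig R ((y @ Y) @ a # X', p) (X' @ (y @ Y), q)"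
  proof (rule lowj_stepI)
    show "y @ Y \<in> lists Sig" using st(2) assms(3) by simp
    show "X' \<in> lists Sig" "set X' \<inter> lsig R p = {}" using st(3,4) X'(1) by auto
  qed (rule st(1))
  then show "lowj_step Sig R (y @ x, p) (w', q)" using X' st(6) by simp
qed

lemma lowj_step_snoc_readable:
  assumes "lowjfa Sig Q q0 F R" "(q, b, p) \<in> R" "w \<in> lists Sig"
  shows "lowj_step Sig R (w @ [b], p) (w', q') \<longleftrightarrow> w' = w \<and> q' = q"
proof
  assume "lowj_step Sig R (w @ [b], p) (w', q')"
  then obtain a X Y where st: "(q', a, p) \<in> R" "set X \<inter> lsig R p = {}"
    "w @ [b] = Y @ a # X" "w' = X @ Y"
    by (rule lowj_stepE)
  have "X = []"
  proof (rule ccontr)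
    assume "X \<noteq> []"
    have "b = last (Y @ a # X)" using st(3) by (metis last_snoc)
    then have "b \<in> set X" using \<open>X \<noteq> []\<close> by simp
    then show False using st(2) in_lsigI[OF assms(2)] by blast
  qed
  then have "a = b" "Y = w" using st(3) by simp_all
  moreover have "q' = q"
    using assms(1) st(1) assms(2) \<open>a = b\<close> unfolding lowjfa_def by blast
  ultimately show "w' = w \<and> q' = q" using st(4) \<open>X = []\<close> by simp
next
  assume "w' = w \<and> q' = q"
  then show "lowj_step Sig R (w @ [b], p) (w', q')"
    using lowj_stepI[OF assms(2) assms(3), of "[]"] by simp
qed


definition lowj_accepts :: "'a set \<Rightarrow> 's set \<Rightarrow> ('s \<times> 'a \<times> 's) set \<Rightarrow> 'a list \<Rightarrow> 's \<Rightarrow> bool" where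
  "lowj_accepts Sig F R w p \<longleftrightarrow> (\<exists>qf\<in>F. (lowj_step Sig R)\<^sup>*\<^sup>* (w, p) ([], qf))"

lemma lowj_lang_iff: "w \<in> lowj_lang Sig Q q0 F R \<longleftrightarrow> w \<in> lists Sig \<and> lowj_accepts Sig F R w q0"
  unfolding lowj_lang_def lowj_accepts_def by blast

lemma lowj_accepts_step:
  "lowj_step Sig R (w, p) (w', q) \<Longrightarrow> lowj_accepts Sig F R w' q \<Longrightarrow> lowj_accepts Sig F R w p"
  unfolding lowj_accepts_def by (meson converse_rtranclp_into_rtranclp)

lemma lowj_accepts_nonempty_iff:
  assumes "w \<noteq> []"
  shows "lowj_accepts Sig F R w p \<longleftrightarrow> (\<exists>w' q. lowj_step Sig R (w, p) (w', q) \<and> lowj_accepts Sig F R w' q)"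
proof
  assume "lowj_accepts Sig F R w p"
  then obtain qf where qf: "qf \<in> F" and steps: "(lowj_step Sig R)\<^sup>*\<^sup>* (w, p) ([], qf)"
    unfolding lowj_accepts_def by blast
  from steps show "\<exists>w' q. lowj_step Sig R (w, p) (w', q) \<and> lowj_accepts Sig F R w' q"
  proof (cases rule: converse_rtranclpE)
    case (step c)
    then show ?thesis using qf unfolding lowj_accepts_def by (cases c) blast
  qed (use assms in simp)
qed (auto intro: lowj_accepts_step)

lemma lowj_accepts_rotate:
  assumes "set y \<inter> lsig R p = {}" "x \<in> lists Sig" "y \<in> lists Sig" "y @ x \<noteq> []"
  shows "lowj_accepts Sig F R (y @ x) p \<longleftrightarrow> lowj_accepts Sig F R (x @ y) p"
proof -
  have "x @ y \<noteq> []" using assms(4) by auto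
  then show ?thesis
    unfolding lowj_accepts_nonempty_iff[OF assms(4)] lowj_accepts_nonempty_iff[OF \<open>x @ y \<noteq> []\<close>]
    using lowj_step_rotate[OF assms(1-3)] by blast
qed

lemma lowj_accepts_snoc_readable:
  assumes "lowjfa Sig Q q0 F R" "(q, b, p) \<in> R" "w \<in> lists Sig"
  shows "lowj_accepts Sig F R (w @ [b]) p \<longleftrightarrow> lowj_accepts Sig F R w q"
proof -
  have "w @ [b] \<noteq> []" by simp
  then show ?thesis
    unfolding lowj_accepts_nonempty_iff[OF \<open>w @ [b] \<noteq> []\<close>] lowj_step_snoc_readable[OF assms]
    by simp
qed

lemma lowj_power_residual_state:
  assumes A: "lowjfa Sig Q q0 F R" and b: "b \<in> Sig"
    and distinguished: "\<And>n. \<exists>x\<in>lists Sig.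
      (b # x @ replicate n b \<in> lowj_lang Sig Q q0 F R) \<noteq> (x @ b # replicate n b \<in> lowj_lang Sig Q q0 F R)"
  shows "\<exists>p\<in>Q. \<forall>w\<in>lists Sig. w @ replicate n b \<in> lowj_lang Sig Q q0 F R \<longleftrightarrow> lowj_accepts Sig F R w p"
proof (induction n)
  case 0
  have "q0 \<in> Q" using A unfolding lowjfa_def by blast
  then show ?case by (auto simp: lowj_lang_iff)
next
  case (Suc n)
  then obtain p where "p \<in> Q"
    and p: "\<And>w. w \<in> lists Sig \<Longrightarrow> w @ replicate n b \<in> lowj_lang Sig Q q0 F R \<longleftrightarrow> lowj_accepts Sig F R w p"
    by blast
  have "b \<in> lsig R p"
  proof (rule ccontr)
    assume "b \<notin> lsig R p"
    obtain x where x: "x \<in> lists Sig"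
      and "(b # x @ replicate n b \<in> lowj_lang Sig Q q0 F R) \<noteq> (x @ b # replicate n b \<in> lowj_lang Sig Q q0 F R)"
      using distinguished by blast
    then have "lowj_accepts Sig F R ([b] @ x) p \<noteq> lowj_accepts Sig F R (x @ [b]) p"
      using p[of "b # x"] p[of "x @ [b]"] b by simp
    moreover have "lowj_accepts Sig F R ([b] @ x) p \<longleftrightarrow> lowj_accepts Sig F R (x @ [b]) p"
      using \<open>b \<notin> lsig R p\<close> x b by (intro lowj_accepts_rotate) auto
    ultimately show False by blast
  qed
  then obtain q where q: "(q, b, p) \<in> R" unfolding lsig_def by blast
  then have "q \<in> Q" using A unfolding lowjfa_def by blast
  moreover have "w @ replicate (Suc n) b \<in> lowj_lang Sig Q q0 F R \<longleftrightarrow> lowj_accepts Sig F R w q"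
    if "w \<in> lists Sig" for w
  proof -
    have "w @ replicate (Suc n) b = (w @ [b]) @ replicate n b"
      by (simp add: replicate_app_Cons_same)
    also have "\<dots> \<in> lowj_lang Sig Q q0 F R \<longleftrightarrow> lowj_accepts Sig F R (w @ [b]) p"
      using p[of "w @ [b]"] that b by simp
    also have "\<dots> \<longleftrightarrow> lowj_accepts Sig F R w q"
      using lowj_accepts_snoc_readable[OF A q that] .
    finally show ?thesis .
  qed
  ultimately show ?case by blast
qed

lemma lowj_power_residuals_collide:
  assumes A: "lowjfa Sig Q q0 F R" and b: "b \<in> Sig"
    and distinguished: "\<And>n. \<exists>x\<in>lists Sig.
      (b # x @ replicate n b \<in> lowj_lang Sig Q q0 F R) \<noteq> (x @ b # replicate n b \<in> lowj_lang Sig Q q0 F R)"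
  obtains m n where "m \<noteq> n" "\<And>w. w \<in> lists Sig \<Longrightarrow>
    w @ replicate m b \<in> lowj_lang Sig Q q0 F R \<longleftrightarrow> w @ replicate n b \<in> lowj_lang Sig Q q0 F R"
proof -
  obtain f where "\<And>n. f n \<in> Q" and f: "\<And>n w. w \<in> lists Sig \<Longrightarrow>
      w @ replicate n b \<in> lowj_lang Sig Q q0 F R \<longleftrightarrow> lowj_accepts Sig F R w (f n)"
    using lowj_power_residual_state[OF A b distinguished] by metis
  moreover have "finite Q" using A unfolding lowjfa_def by blast
  ultimately have "\<not> inj f"
    using inj_on_finite[of f UNIV Q] by auto
  then obtain m n where "m \<noteq> n" "f m = f n" unfolding inj_def by blast
  then show ?thesis using that f by metis
qed


lemma gl_step_deleteI:
  assumes "(q, x, p) \<in> R" "t \<in> lists Sig" "u \<in> lists Sig" "v \<in> lists Sig" "no_factor (gsig R p) u"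
    "\<not> (\<exists>u1 u2 x1 x2. u1 \<noteq> [] \<and> x2 \<noteq> [] \<and> u = u1 @ u2 \<and> x = x1 @ x2 \<and> x2 @ u1 = x)"
  shows "gl_step Sig R (v @ x @ u, p, t) (v, q, u @ t)"
  unfolding gl_step_def using assms by blast

lemma gl_step_jumpI:
  assumes "x \<noteq> []" "x \<in> lists Sig" "y \<in> lists Sig" "no_factor (gsig R p) y"
  shows "gl_step Sig R (y, p, x) (y @ x, p, [])"
  unfolding gl_step_def using assms by blast

lemma gl_stepE:
  assumes "gl_step Sig R c c'"
  obtains (delete) q x p t u v where "(q, x, p) \<in> R" "t \<in> lists Sig" "u \<in> lists Sig" "v \<in> lists Sig"
      "no_factor (gsig R p) u" "c = (v @ x @ u, p, t)" "c' = (v, q, u @ t)"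
    | (jump) p x y where "x \<noteq> []" "x \<in> lists Sig" "y \<in> lists Sig" "no_factor (gsig R p) y"
      "c = (y, p, x)" "c' = (y @ x, p, [])"
  using assms unfolding gl_step_def by blast


section \<open>A GLLOWJ language outside LOWJ\<close>

definition del01_rules :: "(nat \<times> nat list \<times> nat) set" where
  "del01_rules = {(0, [0, 1], 0)}"

definition del01_lang :: "nat list set" where
  "del01_lang = gl_lang {0, 1} {0} 0 {0} del01_rules"

lemma del01_lang_GLLOWJ: "del01_lang \<in> GLLOWJ"
proof -
  have "gllowjfa {0, 1} {0 :: nat} 0 {0} del01_rules"
    unfolding gllowjfa_def del01_rules_def by auto
  then show ?thesis unfolding GLLOWJ_def del01_lang_def by blast
qed

lemma gl_step_del01_contents:
  assumes "gl_step S del01_rules (l, p, r) (l', p', r')"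
  shows "l' @ r' = l @ r \<or> (\<exists>s t. l @ r = s @ [0, 1] @ t \<and> l' @ r' = s @ t)"
  using assms
proof (cases rule: gl_stepE)
  case (delete q x p t u v)
  then show ?thesis unfolding del01_rules_def by auto
qed auto

definition doomed :: "nat list \<Rightarrow> bool" where
  "doomed w \<longleftrightarrow> count_list w 0 \<noteq> count_list w 1 \<or> (w \<noteq> [] \<and> hd w = 1)"

lemma doomed_delete01:
  assumes "doomed (s @ [0, 1] @ t)"
  shows "doomed (s @ t)"
proof -
  have "count_list (s @ [0, 1] @ t) c = count_list (s @ t) c + 1" if "c \<in> {0, 1}" for c :: nat
    using that by auto
  moreover have "s = [] \<Longrightarrow> hd (s @ [0, 1] @ t) \<noteq> 1" by simp
  ultimately show ?thesis using assms unfolding doomed_def by (cases "s = []") auto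
qed

lemma doomed_gl_steps_del01:
  assumes "(gl_step S del01_rules)\<^sup>*\<^sup>* (l, p, r) (l', p', r')" "doomed (l @ r)"
  shows "doomed (l' @ r')"
  using assms
proof (induction "(l', p', r')" arbitrary: l' p' r' rule: rtranclp_induct)
  case (step c)
  obtain l'' p'' r'' where c: "c = (l'', p'', r'')" by (cases c)
  have doomed_c: "doomed (l'' @ r'')" using step.hyps(3)[OF c step.prems] .
  have "l' @ r' = l'' @ r'' \<or> (\<exists>s t. l'' @ r'' = s @ [0, 1] @ t \<and> l' @ r' = s @ t)"
    using gl_step_del01_contents step.hyps(2) unfolding c .
  then show ?case
  proof
    assume "\<exists>s t. l'' @ r'' = s @ [0, 1] @ t \<and> l' @ r' = s @ t"
    then obtain s t where "l'' @ r'' = s @ [0, 1] @ t" "l' @ r' = s @ t" by blast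
    then show ?case using doomed_delete01[of s t] doomed_c by simp
  qed (use doomed_c in simp)
qed simp

lemma doomed_notin_del01_lang:
  assumes "doomed w"
  shows "w \<notin> del01_lang"
proof
  assume "w \<in> del01_lang"
  then obtain qf where steps: "(gl_step {0, 1} del01_rules)\<^sup>*\<^sup>* (w, 0, []) ([], qf, [])"
    unfolding del01_lang_def gl_lang_def by blast
  have "doomed (w @ [])" using assms by simp
  then have "doomed ([] @ [])" by (rule doomed_gl_steps_del01[OF steps])
  then show False by (simp add: doomed_def)
qed

lemma no_factor_del01_replicate: "no_factor (gsig del01_rules 0) (replicate n c)"
proof -
  have "\<not> sublist [0, 1] (replicate n c)"
    using set_mono_sublist[of "[0, 1]" "replicate n c"] by auto
  then show ?thesis unfolding no_factor_def gsig_def del01_rules_def by simp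
qed

lemma gl_steps_del01_replicate:
  "(gl_step {0, 1} del01_rules)\<^sup>*\<^sup>* (replicate n 0 @ replicate n 1, 0, []) ([], 0, [])"
proof (induction n)
  case (Suc n)
  have "replicate (Suc n) 0 @ replicate (Suc n) 1 = replicate n (0 :: nat) @ [0, 1] @ replicate n 1"
    by (simp add: replicate_app_Cons_same)
  moreover have delete: "gl_step {0, 1} del01_rules (replicate n 0 @ [0, 1] @ replicate n 1, 0, [])
      (replicate n 0, 0, replicate n 1 @ [])"
    by (rule gl_step_deleteI[OF _ _ _ _ no_factor_del01_replicate])
      (auto simp: del01_rules_def Cons_eq_append_conv append_eq_Cons_conv)
  moreover have jump: "(gl_step {0, 1} del01_rules)\<^sup>*\<^sup>* (replicate n 0, 0, replicate n 1)
      (replicate n 0 @ replicate n 1, 0, [])"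
  proof (cases n)
    case (Suc m)
    then have "gl_step {0, 1} del01_rules (replicate n 0, 0, replicate n 1) (replicate n 0 @ replicate n 1, 0, [])"
      by (intro gl_step_jumpI no_factor_del01_replicate) auto
    then show ?thesis by blast
  qed simp
  ultimately show ?case
    using converse_rtranclp_into_rtranclp[OF delete[unfolded append_Nil2] rtranclp_trans[OF jump Suc.IH]]
    by simp
qed simp

lemma replicate_in_del01_lang: "replicate n 0 @ replicate n 1 \<in> del01_lang"
  unfolding del01_lang_def gl_lang_def using gl_steps_del01_replicate by auto

lemma del01_lang_not_LOWJ: "del01_lang \<notin> LOWJ"
proof
  assume "del01_lang \<in> LOWJ"
  then obtain Sig and Q :: "nat set" and q0 F R where A: "lowjfa Sig Q q0 F R"
    and L: "del01_lang = lowj_lang Sig Q q0 F R" unfolding LOWJ_def by blast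
  have "[0, 1] \<in> lowj_lang Sig Q q0 F R"
    using replicate_in_del01_lang[of 1] L by simp
  then have "0 \<in> Sig" "1 \<in> Sig" by (auto simp: lowj_lang_def)
  have "\<exists>x\<in>lists Sig. (1 # x @ replicate n 1 \<in> del01_lang) \<noteq> (x @ 1 # replicate n 1 \<in> del01_lang)" for n
  proof
    show "replicate (Suc n) 0 \<in> lists Sig" using \<open>0 \<in> Sig\<close> by auto
    have "1 # replicate (Suc n) 0 @ replicate n 1 \<notin> del01_lang"
      by (rule doomed_notin_del01_lang) (simp add: doomed_def)
    moreover have "replicate (Suc n) 0 @ 1 # replicate n 1 \<in> del01_lang"
      using replicate_in_del01_lang[of "Suc n"] by (simp add: replicate_app_Cons_same)
    ultimately show "(1 # replicate (Suc n) 0 @ replicate n 1 \<in> del01_lang)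
      \<noteq> (replicate (Suc n) 0 @ 1 # replicate n 1 \<in> del01_lang)" by blast
  qed
  then obtain m n where "m \<noteq> n"
    and collide: "\<And>w. w \<in> lists Sig \<Longrightarrow> w @ replicate m 1 \<in> del01_lang \<longleftrightarrow> w @ replicate n 1 \<in> del01_lang"
    using lowj_power_residuals_collide[OF A \<open>1 \<in> Sig\<close>] unfolding L by blast
  have "replicate m 0 \<in> lists Sig" using \<open>0 \<in> Sig\<close> by auto
  then have "replicate m 0 @ replicate n 1 \<in> del01_lang"
    using collide replicate_in_del01_lang by blast
  moreover have "doomed (replicate m 0 @ replicate n 1)"
    using \<open>m \<noteq> n\<close> by (simp add: doomed_def count_list_eq_length_filter)
  ultimately show False using doomed_notin_del01_lang by blast
qed


section \<open>Simulating LOWJFA by GLLOWJFA\<close>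

definition singleton_rules :: "('s \<times> 'a \<times> 's) set \<Rightarrow> ('s \<times> 'a list \<times> 's) set" where
  "singleton_rules R = (\<lambda>(q, a, p). (q, [a], p)) ` R"

lemma in_singleton_rules_iff: "(q, x, p) \<in> singleton_rules R \<longleftrightarrow> (\<exists>a. x = [a] \<and> (q, a, p) \<in> R)"
  unfolding singleton_rules_def by force

lemma sublist_singleton_iff: "sublist [a] u \<longleftrightarrow> a \<in> set u"
  unfolding sublist_def by (metis append_Cons append_Nil in_set_conv_decomp)

lemma no_factor_gsig_singleton_rules:
  "no_factor (gsig (singleton_rules R) p) u \<longleftrightarrow> set u \<inter> lsig R p = {}"
proof -
  have "gsig (singleton_rules R) p = (\<lambda>a. [a]) ` lsig R p"
    unfolding gsig_def lsig_def in_singleton_rules_iff by auto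
  then show ?thesis unfolding no_factor_def by (auto simp: sublist_singleton_iff)
qed

lemma gllowjfa_singleton_rules:
  assumes "lowjfa Sig Q q0 F R"
  shows "gllowjfa Sig Q q0 F (singleton_rules R)"
proof -
  have R: "R \<subseteq> Q \<times> Sig \<times> Q" and fin: "finite Q" "finite Sig" and "q0 \<in> Q" "F \<subseteq> Q"
    and det: "\<And>p a q q'. (q, a, p) \<in> R \<Longrightarrow> (q', a, p) \<in> R \<Longrightarrow> q = q'"
    using assms unfolding lowjfa_def by blast+
  have "finite R" using finite_subset[OF R] fin by simp
  then have "finite (singleton_rules R)" unfolding singleton_rules_def by simp
  moreover have "singleton_rules R \<subseteq> Q \<times> (lists Sig - {[]}) \<times> Q"
    using R unfolding singleton_rules_def by auto
  moreover have "\<forall>p w q q'. (q, w, p) \<in> singleton_rules R \<longrightarrow> (q', w, p) \<in> singleton_rules R \<longrightarrow> q = q'"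
    using det unfolding in_singleton_rules_iff by blast
  ultimately show ?thesis
    unfolding gllowjfa_def using fin \<open>q0 \<in> Q\<close> \<open>F \<subseteq> Q\<close> by blast
qed

lemma gl_step_singleton_rules_delete:
  assumes "(q, a, p) \<in> R" "t \<in> lists Sig" "u \<in> lists Sig" "v \<in> lists Sig" "set u \<inter> lsig R p = {}"
  shows "gl_step Sig (singleton_rules R) (v @ a # u, p, t) (v, q, u @ t)"
  using gl_step_deleteI[of q "[a]" p "singleton_rules R" t Sig u v] assms
  by (auto simp: in_singleton_rules_iff no_factor_gsig_singleton_rules append_eq_Cons_conv)

lemma gl_step_singleton_rules_jump:
  assumes "x \<noteq> []" "x \<in> lists Sig" "y \<in> lists Sig" "set y \<inter> lsig R p = {}"
  shows "gl_step Sig (singleton_rules R) (y, p, x) (y @ x, p, [])"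
  using assms by (intro gl_step_jumpI) (auto simp: no_factor_gsig_singleton_rules)

lemma gl_step_singleton_rulesE:
  assumes "gl_step Sig (singleton_rules R) c c'"
  obtains (delete) q a p t u v where "(q, a, p) \<in> R" "t \<in> lists Sig" "u \<in> lists Sig" "v \<in> lists Sig"
      "set u \<inter> lsig R p = {}" "c = (v @ a # u, p, t)" "c' = (v, q, u @ t)"
    | (jump) p x y where "x \<noteq> []" "x \<in> lists Sig" "y \<in> lists Sig" "set y \<inter> lsig R p = {}"
      "c = (y, p, x)" "c' = (y @ x, p, [])"
  using assms
proof (cases rule: gl_stepE)
  case (delete q x p t u v)
  then obtain a where "x = [a]" "(q, a, p) \<in> R" unfolding in_singleton_rules_iff by blast
  then show thesis using that(1) delete by (simp add: no_factor_gsig_singleton_rules)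
qed (use that(2) in \<open>simp add: no_factor_gsig_singleton_rules\<close>)

lemma lowj_accepts_of_gl_steps:
  assumes "(gl_step Sig (singleton_rules R))\<^sup>*\<^sup>* (l, p, r) ([], qf, [])" "qf \<in> F"
  shows "lowj_accepts Sig F R (r @ l) p"
  using assms(1)
proof (induction "(l, p, r)" arbitrary: l p r rule: converse_rtranclp_induct)
  case base
  show ?case using assms(2) unfolding lowj_accepts_def by auto
next
  case (step c)
  from step.hyps(1) show ?case
  proof (cases rule: gl_step_singleton_rulesE)
    case (delete q a p' t u v)
    then have "lowj_accepts Sig F R ((u @ t) @ v) q" using step.hyps(3) by simp
    moreover have "lowj_step Sig R ((t @ v) @ a # u, p) (u @ t @ v, q)"
      using delete by (intro lowj_stepI) auto
    ultimately show ?thesis using delete by (auto intro: lowj_accepts_step)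
  next
    case (jump p' x y)
    then have "lowj_accepts Sig F R (y @ x) p" using step.hyps(3) by simp
    then show ?thesis using jump lowj_accepts_rotate[of y R p x Sig F] by simp
  qed
qed

lemma gl_step_singleton_rules_of_lowj_step_readable:
  assumes "(q, a, p) \<in> R" "X \<in> lists Sig" "set X \<inter> lsig R p = {}" "r @ l = Y @ a # X"
    "set l \<inter> lsig R p \<noteq> {}" "l \<in> lists Sig" "r \<in> lists Sig"
  obtains v where "gl_step Sig (singleton_rules R) (l, p, r) (v, q, X @ r)" "Y = r @ v" "v \<in> lists Sig"
proof -
  have "\<not> (\<exists>us. X = us @ l)" using assms(3,5) by auto
  then obtain v where v: "l = v @ a # X" "Y = r @ v"
    using append_eq_append_Cons_cases[OF assms(4)] by blast
  then have "v \<in> lists Sig" using assms(6) by simp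
  moreover have "gl_step Sig (singleton_rules R) (l, p, r) (v, q, X @ r)"
    unfolding v(1) using assms(1,7,2) \<open>v \<in> lists Sig\<close> assms(3) by (rule gl_step_singleton_rules_delete)
  ultimately show thesis using that v(2) by blast
qed

lemma gl_steps_singleton_rules_of_lowj_step:
  assumes "lowj_step Sig R (r @ l, p) (w', q)" "l \<in> lists Sig" "r \<in> lists Sig"
  obtains l' r' where "(gl_step Sig (singleton_rules R))\<^sup>*\<^sup>* (l, p, r) (l', q, r')"
    "w' = r' @ l'" "l' \<in> lists Sig" "r' \<in> lists Sig"
proof (cases "set l \<inter> lsig R p = {}")
  case False
  from assms(1) obtain a X Y where st: "(q, a, p) \<in> R" "X \<in> lists Sig" "set X \<inter> lsig R p = {}"
    "r @ l = Y @ a # X" "w' = X @ Y"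
    by (rule lowj_stepE)
  obtain v where "gl_step Sig (singleton_rules R) (l, p, r) (v, q, X @ r)" "Y = r @ v" "v \<in> lists Sig"
    by (rule gl_step_singleton_rules_of_lowj_step_readable[OF st(1-4) False assms(2,3)])
  then show thesis
    using st(2,5) assms(3) by (intro that[of v "X @ r"]) auto
next
  case True
  from assms(1) obtain a X Y where st: "(q, a, p) \<in> R" "r @ l = Y @ a # X"
    by (rule lowj_stepE)
  have "a \<notin> set l" using True in_lsigI[OF st(1)] by blast
  then have "r \<noteq> []" using st(2) by (cases r) auto
  then have jump: "gl_step Sig (singleton_rules R) (l, p, r) (l @ r, p, [])"
    using assms(3,2) True by (rule gl_step_singleton_rules_jump)
  have "lowj_step Sig R (l @ r, p) (w', q)"
    using assms(1) lowj_step_rotate[OF True assms(3,2)] by blast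
  then obtain a' X' Y' where st': "(q, a', p) \<in> R" "X' \<in> lists Sig" "set X' \<inter> lsig R p = {}"
    "[] @ (l @ r) = Y' @ a' # X'" "w' = X' @ Y'"
    by (rule lowj_stepE) simp
  have "a' \<in> set (l @ r)" "a' \<in> lsig R p" using st'(4) in_lsigI[OF st'(1)] by auto
  then have "set (l @ r) \<inter> lsig R p \<noteq> {}" by blast
  then obtain v where "gl_step Sig (singleton_rules R) (l @ r, p, []) (v, q, X' @ [])" "Y' = [] @ v" "v \<in> lists Sig"
    using assms(2,3) by (elim gl_step_singleton_rules_of_lowj_step_readable[OF st'(1-4)]) auto
  then show thesis
    using jump st'(2,5) by (intro that[of v X']) auto
qed

lemma gl_steps_of_lowj_steps:
  assumes "(lowj_step Sig R)\<^sup>*\<^sup>* (r @ l, p) ([], qf)" "l \<in> lists Sig" "r \<in> lists Sig"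
  shows "(gl_step Sig (singleton_rules R))\<^sup>*\<^sup>* (l, p, r) ([], qf, [])"
  using assms
proof (induction "r @ l" p arbitrary: l r rule: converse_rtranclp_induct2)
  case refl
  then show ?case by simp
next
  case (step p w' q)
  obtain l' r' where steps: "(gl_step Sig (singleton_rules R))\<^sup>*\<^sup>* (l, p, r) (l', q, r')"
    and rest: "w' = r' @ l'" "l' \<in> lists Sig" "r' \<in> lists Sig"
    by (rule gl_steps_singleton_rules_of_lowj_step[OF step.hyps(1) step.prems])
  show ?case using rtranclp_trans[OF steps step.hyps(3)[OF rest]] .
qed

lemma gl_lang_singleton_rules: "gl_lang Sig Q q0 F (singleton_rules R) = lowj_lang Sig Q q0 F R"
proof (intro set_eqI iffI)
  fix w
  assume "w \<in> gl_lang Sig Q q0 F (singleton_rules R)"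
  then obtain qf where "w \<in> lists Sig" "qf \<in> F"
    and steps: "(gl_step Sig (singleton_rules R))\<^sup>*\<^sup>* (w, q0, []) ([], qf, [])"
    unfolding gl_lang_def by blast
  then show "w \<in> lowj_lang Sig Q q0 F R"
    unfolding lowj_lang_iff using lowj_accepts_of_gl_steps[OF steps] by simp
next
  fix w
  assume "w \<in> lowj_lang Sig Q q0 F R"
  then obtain qf where "w \<in> lists Sig" "qf \<in> F" and steps: "(lowj_step Sig R)\<^sup>*\<^sup>* ([] @ w, q0) ([], qf)"
    unfolding lowj_lang_def by auto
  then show "w \<in> gl_lang Sig Q q0 F (singleton_rules R)"
    unfolding gl_lang_def using gl_steps_of_lowj_steps[OF steps] by blast
qed

lemma LOWJ_subset_GLLOWJ: "LOWJ \<subseteq> GLLOWJ"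
proof
  fix L :: "'a list set"
  assume "L \<in> LOWJ"
  then obtain Sig and Q :: "nat set" and q0 F R
    where A: "lowjfa Sig Q q0 F R" and "L = lowj_lang Sig Q q0 F R"
    unfolding LOWJ_def by blast
  then have "L = gl_lang Sig Q q0 F (singleton_rules R)" by (simp add: gl_lang_singleton_rules)
  then show "L \<in> GLLOWJ"
    unfolding GLLOWJ_def using gllowjfa_singleton_rules[OF A] by blast
qed

theorem lemma3:
  shows "(\<exists>L :: nat list set. L \<in> GLLOWJ \<and> L \<notin> LOWJ) \<and> (LOWJ :: nat list set set) \<subset> GLLOWJ"
  using del01_lang_GLLOWJ del01_lang_not_LOWJ LOWJ_subset_GLLOWJ by blast

end
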